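(* Consider a complex-balanced mass action chemical reaction network $\Sigma$: $\dot x=-Z\mathcal{L}(x^* )\,\mathrm{Exp}(Z^T\mathrm{Ln}(x/x^* ))$ with complex-equilibrium $x^*\in\mathbb{R}_+^m$. Let $\mathcal{V}_r$ be a set of complexes to be deleted; order the complexes so that those in $\mathcal{V}_r$ come last, partition \[ \mathcal{L}(x^* )=\begin{bmatrix}\mathcal{L}_{11}&\mathcal{L}_{12}\\ \mathcal{L}_{21}&\mathcal{L}_{22}\end{bmatrix},\qquad Z=\begin{bmatrix}Z_1 & Z_2\end{bmatrix} \] accordingly (the second blocks corresponding to $\mathcal{V}_r$), assume $\mathcal{L}_{22}$ is invertible, and let $\hat{\mathcal{L}}(x^* )=\mathcal{L}_{11}-\mathcal{L}_{12}\mathcal{L}_{22}^{-1}\mathcal{L}_{21}$ and $\hat Z=Z_1$. Define the reduced network $\hat\Sigma$: $\dot x=-\hat Z\hat{\mathcal{L}}(x^* )\,\mathrm{Exp}(\hat Z^T\mathrm{Ln}(x/x^* ))$. Let $\mathcal{E}$ and $\hat{\mathcal{E}}$ be the sets of equilibria in $\mathbb{R}_+^m$ of $\Sigma$ and $\hat\Sigma$ respectively. Then $\mathcal{E}\subseteq\hat{\mathcal{E}}$.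
   Context: A mass action chemical reaction network has $m$ species with concentration vector $x\in\mathbb{R}_+^m$ (strictly positive entries), $c$ complexes and $r$ reactions. The complex-stoichiometric matrix $Z\in\mathbb{R}^{m\times c}$ has nonnegative integer entries; its $\alpha$-th column $Z_\alpha$ gives the composition of complex $\alpha$. The graph of complexes has the complexes as vertices and a directed edge for each reaction $j$ from its substrate complex $\mathcal{S}_j$ to its product complex $\mathcal{P}_j$; its incidence matrix $B\in\mathbb{R}^{c\times r}$ has $(\alpha,j)$ entry $-1$ if $\alpha=\mathcal{S}_j$, $+1$ if $\alpha=\mathcal{P}_j$, $0$ otherwise. Reaction $j$ has rate constant $k_j>0$ and rate $v_j(x)=k_j\exp(Z_{\mathcal{S}_j}^T\mathrm{Ln}(x))$. $\mathrm{Ln}$ and $\mathrm{Exp}$ are componentwise logarithm and exponential, $x/x^*$ is componentwise division. With $a_{\pi\sigma}=\sum\{k_j:\mathcal{S}_j=\sigma,\mathcal{P}_j=\pi\}$, $A=(a_{\pi\sigma})$, $\Delta$ diagonal with entries the column sums of $A$, $L=\Delta-A$, the mass action dynamics $\dot x=ZBv(x)$ equal $\dot x=-ZL\,\mathrm{Exp}(Z^T\mathrm{Ln}(x))$. A complex-equilibrium is $x^*\in\mathbb{R}_+^m$ with $Bv(x^* )=0$; the network is complex-balanced if one exists. The weighted Laplacian is $\mathcal{L}(x^* )=L\,\mathrm{diag}_{i=1}^c(\exp(Z_i^T\mathrm{Ln}(x^* )))$; it has zero row and column sums, and with it the dynamics $\dot x=ZBv(x)$ take the form $\dot x=-Z\mathcal{L}(x^*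 )\mathrm{Exp}(Z^T\mathrm{Ln}(x/x^* ))$. An equilibrium of a system $\dot x=f(x)$ is a point $x\in\mathbb{R}_+^m$ with $f(x)=0$. *)

theory Defs
  imports Complex_Main "Jordan_Normal_Form.Matrix"
begin

text \<open>Complexes are indexed 0..<c, species 0..<m, reactions 0..<r.
  Reaction j has substrate complex S j, product complex P j and rate constant k j.\<close>

definition Ln_vec :: "real vec \<Rightarrow> real vec" where
  "Ln_vec v = map_vec ln v"

definition Exp_vec :: "real vec \<Rightarrow> real vec" where
  "Exp_vec v = map_vec exp v"

definition div_vec :: "real vec \<Rightarrow> real vec \<Rightarrow> real vec" where
  "div_vec x y = vec (dim_vec x) (\<lambda>i. x $ i / y $ i)"

definition pos_vec :: "nat \<Rightarrow> real vec \<Rightarrow> bool" where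
  "pos_vec m x \<longleftrightarrow> x \<in> carrier_vec m \<and> (\<forall>i<m. x $ i > 0)"

definition rate_mat :: "nat \<Rightarrow> nat \<Rightarrow> (nat \<Rightarrow> nat) \<Rightarrow> (nat \<Rightarrow> nat) \<Rightarrow> (nat \<Rightarrow> real) \<Rightarrow> real mat" where
  "rate_mat c r S P k = mat c c (\<lambda>(p, s). \<Sum>j\<in>{j. j < r \<and> S j = s \<and> P j = p}. k j)"

definition colsum_diag :: "real mat \<Rightarrow> real mat" where
  "colsum_diag A = mat (dim_row A) (dim_col A)
     (\<lambda>(i, j). if i = j then (\<Sum>p<dim_row A. A $$ (p, j)) else 0)"

definition laplacian :: "nat \<Rightarrow> nat \<Rightarrow> (nat \<Rightarrow> nat) \<Rightarrow> (nat \<Rightarrow> nat) \<Rightarrow> (nat \<Rightarrow> real) \<Rightarrow> real mat" where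
  "laplacian c r S P k = colsum_diag (rate_mat c r S P k) - rate_mat c r S P k"

definition incidence :: "nat \<Rightarrow> nat \<Rightarrow> (nat \<Rightarrow> nat) \<Rightarrow> (nat \<Rightarrow> nat) \<Rightarrow> real mat" where
  "incidence c r S P = mat c r (\<lambda>(a, j). (if a = P j then 1 else 0) - (if a = S j then 1 else 0))"

definition rates :: "real mat \<Rightarrow> nat \<Rightarrow> (nat \<Rightarrow> nat) \<Rightarrow> (nat \<Rightarrow> real) \<Rightarrow> real vec \<Rightarrow> real vec" where
  "rates Z r S k x = vec r (\<lambda>j. k j * exp (col Z (S j) \<bullet> Ln_vec x))"

definition complex_equilibrium ::
  "real mat \<Rightarrow> nat \<Rightarrow> nat \<Rightarrow> (nat \<Rightarrow> nat) \<Rightarrow> (nat \<Rightarrow> nat) \<Rightarrow> (nat \<Rightarrow> real) \<Rightarrow> real vec \<Rightarrow> bool" where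
  "complex_equilibrium Z c r S P k xs \<longleftrightarrow>
     pos_vec (dim_row Z) xs \<and> incidence c r S P *\<^sub>v rates Z r S k xs = 0\<^sub>v c"

definition weighted_laplacian ::
  "real mat \<Rightarrow> nat \<Rightarrow> nat \<Rightarrow> (nat \<Rightarrow> nat) \<Rightarrow> (nat \<Rightarrow> nat) \<Rightarrow> (nat \<Rightarrow> real) \<Rightarrow> real vec \<Rightarrow> real mat" where
  "weighted_laplacian Z c r S P k xs =
     laplacian c r S P k * mat c c (\<lambda>(i, j). if i = j then exp (col Z i \<bullet> Ln_vec xs) else 0)"

definition ma_field :: "real mat \<Rightarrow> real mat \<Rightarrow> real vec \<Rightarrow> real vec \<Rightarrow> real vec" where
  "ma_field Z W xs x = - ((Z * W) *\<^sub>v Exp_vec (transpose_mat Z *\<^sub>v Ln_vec (div_vec x xs)))"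

definition equilibria :: "real mat \<Rightarrow> real mat \<Rightarrow> real vec \<Rightarrow> real vec set" where
  "equilibria Z W xs = {x. pos_vec (dim_row Z) x \<and> ma_field Z W xs x = 0\<^sub>v (dim_row Z)}"

end

theory Submission
  imports Defs
begin

text \<open>
  At an equilibrium x of the full network the vector y = Exp(Z^T Ln(x/x*)) satisfies Z L(x*) y = 0,
  hence Ln y \<bullet> L(x*) y = Ln(x/x*) \<bullet> Z L(x*) y = 0. The weighted Laplacian has nonpositive
  off-diagonal entries, zero column sums by construction and zero row sums because x* is a
  complex-equilibrium. For such a matrix Ln y \<bullet> L y is a sum of the nonnegative terms
  -L_ps (y_s ln(y_s/y_p) - y_s + y_p), so all of them vanish, y is constant along every edge and
  L(x*) y = 0. Splitting y = (y1, y2), the second block row gives y2 = -L22^-1 L21 y1, and the first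
  then shows that the Schur complement annihilates y1 = Exp(Z1^T Ln(x/x*)).
\<close>

definition balanced_laplacian :: "nat \<Rightarrow> real mat \<Rightarrow> bool" where
  "balanced_laplacian n W \<longleftrightarrow> W \<in> carrier_mat n n
     \<and> (\<forall>p<n. \<forall>s<n. p \<noteq> s \<longrightarrow> W $$ (p, s) \<le> 0)
     \<and> (\<forall>p<n. (\<Sum>s<n. W $$ (p, s)) = 0)
     \<and> (\<forall>s<n. (\<Sum>p<n. W $$ (p, s)) = 0)"

lemma ln_divergence_nonneg:
  fixes a b :: real
  assumes "a > 0" "b > 0"
  shows "a * (ln a - ln b) - a + b \<ge> 0"
proof -
  have "ln (b / a) \<le> b / a - 1" using assms by (intro ln_le_minus_one) simp
  then have "a * ln (b / a) \<le> b - a" using assms by (simp add: field_simps)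
  then show ?thesis using assms by (simp add: ln_div algebra_simps)
qed

lemma ln_divergence_eq_0_iff:
  fixes a b :: real
  assumes "a > 0" "b > 0"
  shows "a * (ln a - ln b) - a + b = 0 \<longleftrightarrow> a = b"
proof
  assume "a * (ln a - ln b) - a + b = 0"
  then have "a * (b / a - 1 - ln (b / a)) = 0" using assms by (simp add: ln_div field_simps)
  then have "ln (b / a) = b / a - 1" using assms by simp
  then have "b / a = 1" using assms by (intro ln_eq_minus_one) auto
  then show "a = b" using assms by simp
qed simp

lemma balanced_laplacian_kernel_if_ln_orthogonal:
  assumes W: "balanced_laplacian n W"
    and y: "y \<in> carrier_vec n" and y_pos: "\<And>i. i < n \<Longrightarrow> y $ i > 0"
    and orth: "Ln_vec y \<bullet> (W *\<^sub>v y) = 0"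
  shows "W *\<^sub>v y = 0\<^sub>v n"
proof -
  have Wc: "W \<in> carrier_mat n n"
    and off: "\<And>p s. p < n \<Longrightarrow> s < n \<Longrightarrow> p \<noteq> s \<Longrightarrow> W $$ (p, s) \<le> 0"
    and rows: "\<And>p. p < n \<Longrightarrow> (\<Sum>s<n. W $$ (p, s)) = 0"
    and cols: "\<And>s. s < n \<Longrightarrow> (\<Sum>p<n. W $$ (p, s)) = 0"
    using W unfolding balanced_laplacian_def by auto
  have Wy: "(W *\<^sub>v y) $ p = (\<Sum>s<n. W $$ (p, s) * y $ s)" if "p < n" for p
    using that Wc y by (simp add: scalar_prod_def lessThan_atLeast0)
  define g where "g p s = - W $$ (p, s) * (y $ s * (ln (y $ s) - ln (y $ p)) - y $ s + y $ p)" for p s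
  have g_nonneg: "g p s \<ge> 0" if "p < n" "s < n" for p s
    using off[OF that] ln_divergence_nonneg[OF y_pos y_pos, OF that(2,1)]
    by (cases "p = s") (auto simp: g_def mult_nonpos_nonneg)
  have g_expand: "g p s = W $$ (p, s) * y $ s * ln (y $ p)
      - W $$ (p, s) * (y $ s * ln (y $ s) - y $ s) - W $$ (p, s) * y $ p" for p s
    by (simp add: g_def algebra_simps)
  \<comment> \<open>Column sums kill the second term, row sums the third.\<close>
  have "(\<Sum>p<n. \<Sum>s<n. g p s) = (\<Sum>p<n. \<Sum>s<n. W $$ (p, s) * y $ s * ln (y $ p))
      - (\<Sum>s<n. (\<Sum>p<n. W $$ (p, s)) * (y $ s * ln (y $ s) - y $ s))
      - (\<Sum>p<n. (\<Sum>s<n. W $$ (p, s)) * y $ p)"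
    unfolding g_expand sum_subtractf sum_distrib_right
    by (subst (2) sum.swap) (rule refl)
  also have "\<dots> = (\<Sum>p<n. ln (y $ p) * (W *\<^sub>v y) $ p)"
    by (simp add: rows cols Wy sum_distrib_left mult_ac)
  also have "\<dots> = Ln_vec y \<bullet> (W *\<^sub>v y)"
    using y Wc by (simp add: Ln_vec_def scalar_prod_def lessThan_atLeast0)
  finally have "(\<Sum>p<n. \<Sum>s<n. g p s) = 0" using orth by simp
  then have "(\<Sum>s<n. g p s) = 0" if "p < n" for p
    using that g_nonneg by (subst (asm) sum_nonneg_eq_0_iff) (auto intro: sum_nonneg)
  then have g_zero: "g p s = 0" if "p < n" "s < n" for p s
    using that g_nonneg sum_nonneg_eq_0_iff[of "{..<n}" "g p"] by simp
  have "W $$ (p, s) * y $ s = W $$ (p, s) * y $ p" if "p < n" "s < n" for p s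
  proof (cases "W $$ (p, s) = 0")
    case False
    then show ?thesis using g_zero[OF that] ln_divergence_eq_0_iff[OF y_pos y_pos, OF that(2,1)]
      by (simp add: g_def)
  qed simp
  then have "(W *\<^sub>v y) $ p = (\<Sum>s<n. W $$ (p, s)) * y $ p" if "p < n" for p
    using that unfolding Wy[OF that] sum_distrib_right by (intro sum.cong) auto
  then show ?thesis using Wc rows by (intro eq_vecI) auto
qed

lemma rate_mat_index:
  assumes "p < c" "s < c"
  shows "rate_mat c r S P k $$ (p, s) = (\<Sum>j<r. if S j = s \<and> P j = p then k j else 0)"
proof -
  have "sum k {j. j < r \<and> S j = s \<and> P j = p} = sum k {j \<in> {..<r}. S j = s \<and> P j = p}"
    by (rule arg_cong[where f = "sum k"]) auto
  also have "\<dots> = (\<Sum>j<r. if S j = s \<and> P j = p then k j else 0)"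
    by (rule sum.inter_filter) simp
  finally show ?thesis using assms by (simp add: rate_mat_def)
qed

lemma rate_mat_col_sum:
  assumes SP: "\<forall>j<r. S j < c \<and> P j < c" and s: "s < c"
  shows "(\<Sum>p<c. rate_mat c r S P k $$ (p, s)) = (\<Sum>j<r. if S j = s then k j else 0)"
proof -
  have "(\<Sum>p<c. rate_mat c r S P k $$ (p, s)) = (\<Sum>p<c. \<Sum>j<r. if S j = s \<and> P j = p then k j else 0)"
    using s by (intro sum.cong) (simp_all add: rate_mat_index)
  also have "\<dots> = (\<Sum>j<r. \<Sum>p<c. if S j = s \<and> P j = p then k j else 0)"
    by (rule sum.swap)
  also have "\<dots> = (\<Sum>j<r. if S j = s then k j else 0)"
    using SP by (intro sum.cong) auto
  finally show ?thesis .
qed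

lemma rate_mat_weighted_row_sum:
  assumes SP: "\<forall>j<r. S j < c \<and> P j < c" and p: "p < c"
  shows "(\<Sum>s<c. rate_mat c r S P k $$ (p, s) * d s) = (\<Sum>j<r. if P j = p then k j * d (S j) else 0)"
proof -
  have "(\<Sum>s<c. rate_mat c r S P k $$ (p, s) * d s)
      = (\<Sum>s<c. \<Sum>j<r. if S j = s \<and> P j = p then k j * d s else 0)"
    using p by (auto simp: rate_mat_index sum_distrib_right intro!: sum.cong)
  also have "\<dots> = (\<Sum>j<r. \<Sum>s<c. if S j = s \<and> P j = p then k j * d s else 0)"
    by (rule sum.swap)
  also have "\<dots> = (\<Sum>j<r. if P j = p then k j * d (S j) else 0)"
    using SP by (intro sum.cong) auto
  finally show ?thesis .
qed

lemma laplacian_carrier: "laplacian c r S P k \<in> carrier_mat c c"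
  unfolding laplacian_def rate_mat_def by (rule minus_carrier_mat, rule mat_carrier)

lemma weighted_laplacian_carrier: "weighted_laplacian Z c r S P k xs \<in> carrier_mat c c"
  unfolding weighted_laplacian_def by (rule mult_carrier_mat[OF laplacian_carrier mat_carrier])

lemma mult_diag_mat_index:
  fixes M :: "'a :: semiring_0 mat"
  assumes M: "M \<in> carrier_mat n n" and p: "p < n" and s: "s < n"
  shows "(M * mat n n (\<lambda>(i, j). if i = j then d i else 0)) $$ (p, s) = M $$ (p, s) * d s"
proof -
  have "(M * mat n n (\<lambda>(i, j). if i = j then d i else 0)) $$ (p, s)
      = (\<Sum>i<n. M $$ (p, i) * (if i = s then d i else 0))"
    using M p s by (simp add: scalar_prod_def lessThan_atLeast0)
  also have "\<dots> = M $$ (p, s) * d s"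
    using s by (simp add: if_distrib[of "\<lambda>a. _ * a"] cong: if_cong)
  finally show ?thesis .
qed

lemma laplacian_index:
  assumes "p < c" "s < c"
  shows "laplacian c r S P k $$ (p, s)
    = (if p = s then \<Sum>q<c. rate_mat c r S P k $$ (q, s) else 0) - rate_mat c r S P k $$ (p, s)"
proof -
  have dims: "dim_row (rate_mat c r S P k) = c" "dim_col (rate_mat c r S P k) = c"
    by (simp_all add: rate_mat_def)
  show ?thesis
    using assms unfolding laplacian_def colsum_diag_def dims
    by (subst index_minus_mat) (simp_all add: dims)
qed

lemma weighted_laplacian_index:
  assumes "p < c" "s < c"
  shows "weighted_laplacian Z c r S P k xs $$ (p, s)
    = ((if p = s then \<Sum>q<c. rate_mat c r S P k $$ (q, s) else 0) - rate_mat c r S P k $$ (p, s))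
      * exp (col Z s \<bullet> Ln_vec xs)"
  unfolding weighted_laplacian_def mult_diag_mat_index[OF laplacian_carrier assms]
    laplacian_index[OF assms] ..

lemma incidence_mult_rates_index:
  assumes "p < c"
  shows "(incidence c r S P *\<^sub>v rates Z r S k xs) $ p
    = (\<Sum>j<r. if P j = p then k j * exp (col Z (S j) \<bullet> Ln_vec xs) else 0)
      - (\<Sum>j<r. if S j = p then k j * exp (col Z (S j) \<bullet> Ln_vec xs) else 0)"
proof -
  define v where "v j = k j * exp (col Z (S j) \<bullet> Ln_vec xs)" for j
  have "(incidence c r S P *\<^sub>v rates Z r S k xs) $ p
      = (\<Sum>j<r. ((if p = P j then 1 else 0) - (if p = S j then 1 else 0)) * v j)"
    using assms by (simp add: incidence_def rates_def v_def scalar_prod_def lessThan_atLeast0)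
  also have "\<dots> = (\<Sum>j<r. (if P j = p then v j else 0) - (if S j = p then v j else 0))"
    by (intro sum.cong) auto
  also have "\<dots> = (\<Sum>j<r. if P j = p then v j else 0) - (\<Sum>j<r. if S j = p then v j else 0)"
    by (rule sum_subtractf)
  finally show ?thesis
    unfolding v_def .
qed

lemma weighted_laplacian_balanced:
  assumes SP: "\<forall>j<r. S j < c \<and> P j < c" and k_nonneg: "\<forall>j<r. k j \<ge> 0"
    and ceq: "complex_equilibrium Z c r S P k xs"
  shows "balanced_laplacian c (weighted_laplacian Z c r S P k xs)"
proof -
  define W where "W = weighted_laplacian Z c r S P k xs"
  define A where "A = rate_mat c r S P k"
  define d where "d s = exp (col Z s \<bullet> Ln_vec xs)" for s
  have W_index: "W $$ (p, s) = ((if p = s then \<Sum>q<c. A $$ (q, s) else 0) - A $$ (p, s)) * d s"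
    if "p < c" "s < c" for p s
    using weighted_laplacian_index[OF that] by (simp add: W_def A_def d_def)
  have "W \<in> carrier_mat c c"
    unfolding W_def by (rule weighted_laplacian_carrier)
  moreover have "W $$ (p, s) \<le> 0" if "p < c" "s < c" "p \<noteq> s" for p s
  proof -
    have "A $$ (p, s) \<ge> 0"
      using that k_nonneg by (simp add: A_def rate_mat_index) (intro sum_nonneg, simp)
    then show ?thesis using that by (simp add: W_index d_def)
  qed
  moreover have "(\<Sum>p<c. W $$ (p, s)) = 0" if "s < c" for s
    using that by (simp add: W_index sum_distrib_right[symmetric] sum_subtractf)
  moreover have "(\<Sum>s<c. W $$ (p, s)) = 0" if p: "p < c" for p
  proof -
    have "(\<Sum>s<c. W $$ (p, s)) = (\<Sum>q<c. A $$ (q, p)) * d p - (\<Sum>s<c. A $$ (p, s) * d s)"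
      using p by (simp add: W_index left_diff_distrib sum_subtractf if_distrib[of "\<lambda>a. a * _"]
          cong: if_cong)
    also have "(\<Sum>q<c. A $$ (q, p)) * d p = (\<Sum>j<r. if S j = p then k j * d (S j) else 0)"
      unfolding A_def rate_mat_col_sum[OF SP p] sum_distrib_right by (intro sum.cong) auto
    also have "(\<Sum>s<c. A $$ (p, s) * d s) = (\<Sum>j<r. if P j = p then k j * d (S j) else 0)"
      unfolding A_def by (rule rate_mat_weighted_row_sum[OF SP p])
    also have "(\<Sum>j<r. if S j = p then k j * d (S j) else 0)
        - (\<Sum>j<r. if P j = p then k j * d (S j) else 0)
        = - (incidence c r S P *\<^sub>v rates Z r S k xs) $ p"
      unfolding incidence_mult_rates_index[OF p] d_def by simp
    also have "\<dots> = 0"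
      using ceq p by (simp add: complex_equilibrium_def)
    finally show ?thesis .
  qed
  ultimately show ?thesis
    unfolding balanced_laplacian_def W_def by auto
qed

lemma mult_mat_vec_zero: "A \<in> carrier_mat nr nc \<Longrightarrow> A *\<^sub>v 0\<^sub>v nc = (0\<^sub>v nr :: 'a :: semiring_0 vec)"
  by (intro eq_vecI) auto

lemma schur_complement_mult_eq_0:
  fixes A B C D Dinv :: "'a :: comm_ring_1 mat"
  assumes A: "A \<in> carrier_mat n1 n1" and B: "B \<in> carrier_mat n1 n2"
    and C: "C \<in> carrier_mat n2 n1" and D: "D \<in> carrier_mat n2 n2"
    and Dinv: "Dinv \<in> carrier_mat n2 n2" "inverts_mat Dinv D"
    and y1: "y1 \<in> carrier_vec n1" and y2: "y2 \<in> carrier_vec n2"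
    and kernel: "four_block_mat A B C D *\<^sub>v (y1 @\<^sub>v y2) = 0\<^sub>v (n1 + n2)"
  shows "(A - B * Dinv * C) *\<^sub>v y1 = 0\<^sub>v n1"
proof -
  have "(A *\<^sub>v y1 + B *\<^sub>v y2) @\<^sub>v (C *\<^sub>v y1 + D *\<^sub>v y2) = four_block_mat A B C D *\<^sub>v (y1 @\<^sub>v y2)"
    by (rule four_block_mat_mult_vec[OF A B C D y1 y2, symmetric])
  also have "\<dots> = 0\<^sub>v n1 @\<^sub>v 0\<^sub>v n2"
    unfolding kernel by (intro eq_vecI) auto
  moreover have "A *\<^sub>v y1 + B *\<^sub>v y2 \<in> carrier_vec n1"
    using A B y1 y2 by (intro add_carrier_vec mult_mat_vec_carrier)
  ultimately have first_row: "A *\<^sub>v y1 + B *\<^sub>v y2 = 0\<^sub>v n1"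
    and second_row: "C *\<^sub>v y1 + D *\<^sub>v y2 = 0\<^sub>v n2"
    by (simp_all add: append_vec_eq)
  have Cy1: "C *\<^sub>v y1 \<in> carrier_vec n2" and Dy2: "D *\<^sub>v y2 \<in> carrier_vec n2"
    using C D y1 y2 by (auto intro: mult_mat_vec_carrier)
  define w where "w = Dinv *\<^sub>v (C *\<^sub>v y1)"
  have w: "w \<in> carrier_vec n2"
    unfolding w_def using Dinv(1) Cy1 by (rule mult_mat_vec_carrier)
  have "Dinv *\<^sub>v (D *\<^sub>v y2) = y2"
    using Dinv D y2 by (simp add: assoc_mult_mat_vec[symmetric] inverts_mat_def)
  then have "w + y2 = Dinv *\<^sub>v (C *\<^sub>v y1 + D *\<^sub>v y2)"
    unfolding w_def mult_add_distrib_mat_vec[OF Dinv(1) Cy1 Dy2] by simp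
  then have y2_eq: "w + y2 = 0\<^sub>v n2"
    using second_row Dinv by (simp add: mult_mat_vec_zero)
  have BDinv: "B * Dinv \<in> carrier_mat n1 n2"
    using B Dinv(1) by (rule mult_carrier_mat)
  have "(B * Dinv * C) *\<^sub>v y1 = B *\<^sub>v w"
    unfolding w_def assoc_mult_mat_vec[OF BDinv C y1] assoc_mult_mat_vec[OF B Dinv(1) Cy1] ..
  then have reduced: "(A - B * Dinv * C) *\<^sub>v y1 = A *\<^sub>v y1 - B *\<^sub>v w"
    using A B C Dinv y1 by (simp add: minus_mult_distrib_mat_vec)
  have By2: "B *\<^sub>v w + B *\<^sub>v y2 = 0\<^sub>v n1"
    using B w y2 y2_eq by (simp add: mult_add_distrib_mat_vec[symmetric] mult_mat_vec_zero)
  show ?thesis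
  proof (rule eq_vecI)
    fix i assume "i < dim_vec (0\<^sub>v n1 :: 'a vec)"
    then have i: "i < n1" by simp
    have "(A *\<^sub>v y1) $ i + (B *\<^sub>v y2) $ i = 0" "(B *\<^sub>v w) $ i + (B *\<^sub>v y2) $ i = 0"
      using arg_cong[OF first_row, of "\<lambda>v. v $ i"] arg_cong[OF By2, of "\<lambda>v. v $ i"] i A B
      by simp_all
    then have "(A *\<^sub>v y1) $ i = (B *\<^sub>v w) $ i"
      by (metis add_right_cancel)
    then show "((A - B * Dinv * C) *\<^sub>v y1) $ i = 0\<^sub>v n1 $ i"
      unfolding reduced using i A B by simp
  qed (use A B in \<open>simp add: reduced\<close>)
qed

lemma ma_field_eq_0_imp_laplacian_kernel:
  assumes Z: "Z \<in> carrier_mat m c" and W: "balanced_laplacian c W"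
    and x: "x \<in> carrier_vec m" and field: "ma_field Z W xs x = 0\<^sub>v m"
  shows "W *\<^sub>v Exp_vec (transpose_mat Z *\<^sub>v Ln_vec (div_vec x xs)) = 0\<^sub>v c"
proof -
  define u where "u = Ln_vec (div_vec x xs)"
  define y where "y = Exp_vec (transpose_mat Z *\<^sub>v u)"
  have Wc: "W \<in> carrier_mat c c" using W by (simp add: balanced_laplacian_def)
  have u: "u \<in> carrier_vec m" using x by (intro carrier_vecI) (simp add: u_def Ln_vec_def div_vec_def)
  have y: "y \<in> carrier_vec c" using Z by (intro carrier_vecI) (simp add: y_def Exp_vec_def)
  have Wy: "W *\<^sub>v y \<in> carrier_vec c" using Wc y by (rule mult_mat_vec_carrier)
  have "(Z * W) *\<^sub>v y = 0\<^sub>v m"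
  proof -
    have "(Z * W) *\<^sub>v y \<in> carrier_vec m" using Z by (intro carrier_vecI) simp
    moreover have "- ((Z * W) *\<^sub>v y) = 0\<^sub>v m"
      using field by (simp add: ma_field_def y_def u_def)
    ultimately show ?thesis
      by (simp add: uminus_zero_vec_eq)
  qed
  then have ZWy: "Z *\<^sub>v (W *\<^sub>v y) = 0\<^sub>v m"
    using Z Wc y by simp
  have "Ln_vec y = transpose_mat Z *\<^sub>v u"
    using Z by (intro eq_vecI) (simp_all add: y_def Ln_vec_def Exp_vec_def)
  then have "Ln_vec y \<bullet> (W *\<^sub>v y) = u \<bullet> (Z *\<^sub>v (W *\<^sub>v y))"
    using transpose_vec_mult_scalar[OF Z Wy u] by simp
  also have "\<dots> = 0" using ZWy u by simp
  finally have "Ln_vec y \<bullet> (W *\<^sub>v y) = 0" .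
  moreover have "y $ i > 0" if "i < c" for i
    using that Z by (simp add: y_def Exp_vec_def)
  ultimately show ?thesis
    using balanced_laplacian_kernel_if_ln_orthogonal[OF W y] by (simp add: y_def u_def)
qed

lemma ma_field_eq_0_if_laplacian_kernel:
  assumes Z: "Z \<in> carrier_mat m c" and W: "W \<in> carrier_mat c c"
    and kernel: "W *\<^sub>v Exp_vec (transpose_mat Z *\<^sub>v Ln_vec (div_vec x xs)) = 0\<^sub>v c"
  shows "ma_field Z W xs x = 0\<^sub>v m"
proof -
  have "Exp_vec (transpose_mat Z *\<^sub>v Ln_vec (div_vec x xs)) \<in> carrier_vec c"
    using Z by (intro carrier_vecI) (simp add: Exp_vec_def)
  then show ?thesis
    using Z W kernel by (simp add: ma_field_def mult_mat_vec_zero)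
qed

lemma Exp_transpose_first_columns:
  assumes Z: "Z \<in> carrier_mat m (c1 + c2)" and u: "u \<in> carrier_vec m"
  shows "Exp_vec (transpose_mat (mat m c1 (\<lambda>ij. Z $$ ij)) *\<^sub>v u)
    = vec_first (Exp_vec (transpose_mat Z *\<^sub>v u)) c1"
proof (rule eq_vecI)
  fix i assume "i < dim_vec (vec_first (Exp_vec (transpose_mat Z *\<^sub>v u)) c1)"
  then have i: "i < c1" by simp
  have "col (mat m c1 (\<lambda>ij. Z $$ ij)) i = col Z i"
    using Z i by (intro eq_vecI) auto
  then show "Exp_vec (transpose_mat (mat m c1 (\<lambda>ij. Z $$ ij)) *\<^sub>v u) $ i
      = vec_first (Exp_vec (transpose_mat Z *\<^sub>v u)) c1 $ i"
    using Z i by (simp add: Exp_vec_def vec_first_def)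
qed (simp add: Exp_vec_def)

theorem proposition3:
  fixes m c1 c2 r :: nat
    and Z :: "real mat"
    and S P :: "nat \<Rightarrow> nat"
    and k :: "nat \<Rightarrow> real"
    and xs :: "real vec"
    and L11 L12 L21 L22 L22inv :: "real mat"
  assumes Z_dim: "Z \<in> carrier_mat m (c1 + c2)"
    and Z_nat: "\<forall>i<m. \<forall>a<c1 + c2. Z $$ (i, a) \<in> \<nat>"
    and SP: "\<forall>j<r. S j < c1 + c2 \<and> P j < c1 + c2"
    and k_pos: "\<forall>j<r. k j > 0"
    and ceq: "complex_equilibrium Z (c1 + c2) r S P k xs"
    and split: "split_block (weighted_laplacian Z (c1 + c2) r S P k xs) c1 c1 = (L11, L12, L21, L22)"
    and inv_dim: "L22inv \<in> carrier_mat c2 c2"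
    and inv1: "inverts_mat L22 L22inv"
    and inv2: "inverts_mat L22inv L22"
  shows "equilibria Z (weighted_laplacian Z (c1 + c2) r S P k xs) xs
         \<subseteq> equilibria (mat m c1 (\<lambda>ij. Z $$ ij)) (L11 - L12 * L22inv * L21) xs"
proof
  define W where "W = weighted_laplacian Z (c1 + c2) r S P k xs"
  let ?Z1 = "mat m c1 (\<lambda>ij. Z $$ ij)"
  have W: "balanced_laplacian (c1 + c2) W"
    unfolding W_def using SP k_pos ceq by (intro weighted_laplacian_balanced) (auto intro: less_imp_le)
  have "dim_row W = c1 + c2" "dim_col W = c1 + c2"
    using weighted_laplacian_carrier[of Z "c1 + c2" r S P k xs] by (simp_all add: W_def)
  note blocks = split_block[OF split[folded W_def] this]
  fix x assume "x \<in> equilibria Z (weighted_laplacian Z (c1 + c2) r S P k xs) xs"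
  then have x: "pos_vec m x" and field: "ma_field Z W xs x = 0\<^sub>v m"
    using Z_dim by (auto simp: equilibria_def W_def)
  define u where "u = Ln_vec (div_vec x xs)"
  define y where "y = Exp_vec (transpose_mat Z *\<^sub>v u)"
  have u: "u \<in> carrier_vec m"
    using x by (intro carrier_vecI) (simp add: u_def pos_vec_def Ln_vec_def div_vec_def)
  have y: "y \<in> carrier_vec (c1 + c2)"
    using Z_dim by (intro carrier_vecI) (simp add: y_def Exp_vec_def)
  have "W *\<^sub>v (vec_first y c1 @\<^sub>v vec_last y c2) = 0\<^sub>v (c1 + c2)"
    using ma_field_eq_0_imp_laplacian_kernel[OF Z_dim W _ field] x y
    by (simp add: pos_vec_def y_def u_def)
  then have "(L11 - L12 * L22inv * L21) *\<^sub>v vec_first y c1 = 0\<^sub>v c1"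
    using blocks inv_dim inv2 by (intro schur_complement_mult_eq_0) auto
  then have "ma_field ?Z1 (L11 - L12 * L22inv * L21) xs x = 0\<^sub>v m"
    using Exp_transpose_first_columns[OF Z_dim u] blocks inv_dim
    by (intro ma_field_eq_0_if_laplacian_kernel) (auto simp: y_def u_def)
  then show "x \<in> equilibria ?Z1 (L11 - L12 * L22inv * L21) xs"
    using x by (simp add: equilibria_def)
qed

end
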